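(* A regular language $L\subseteq\Sigma^*$ is biRFSA if and only if it is topological. Moreover, if $L$ is topological, then the map $\theta\colon J(\mathrm{LQ}(L))\to J(\mathrm{LQ}(L^r))$ defined by $\mathrm{dr}_L(\theta(j))=\tau(j)$, where $\tau(j)=\bigcup\{X\in\mathrm{LQ}(L): j\not\subseteq X\}$, is an nfa isomorphism from $N_L$ to $(N_{L^r})^r$.
   Context: $u^{-1}L=\{w:uw\in L\}$, $U^{-1}L=\bigcup_{u\in U}u^{-1}L$; $w^r$ is the reversal of $w$, $K^r=\{w^r:w\in K\}$, $\overline K=\Sigma^*\setminus K$. $\mathrm{LQ}(L)$ is the finite lattice (under $\subseteq$) of finite unions (including $\emptyset$) of left derivatives of $L$; $J(S)$ is the set of join-irreducible elements of a finite lattice $S$. $L$ is topological if $\mathrm{LQ}(L)$ is a distributive lattice. The canonical residual automaton $N_L$ is the nfa with states $J(\mathrm{LQ}(L))$, transitions $X\xrightarrow{a}Y$ iff $Y\subseteq a^{-1}X$, initial states those $X\subseteq L$, final states those $X$ with $\epsilon\in X$. For an nfa $N$, $N^r$ is its reverse (transitions reversed, initial and final states swapped). $L$ is biRFSA if $N_L$ is isomorphic (as an nfa) to $(N_{L^r})^r$. $\mathrm{dr}_L\colon\mathrm{LQ}(L^r)\to\mathrm{LQ}(L)$, $K\mapsto(\overline{K^r})^{-1}L$, is an order-reversing bijection which restricts to a bijection from $J(\mathrm{LQ}(L^r))$ onto the meet-irreducible elements of $\mathrm{LQ}(L)$. *)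

theory Defs
  imports Main
begin

definition regular :: "'a set \<Rightarrow> 'a list set \<Rightarrow> bool" where
  "regular \<Sigma> L \<longleftrightarrow> (\<exists>(Q::nat set) q0 \<delta> F. finite Q \<and> q0 \<in> Q \<and>
      (\<forall>q\<in>Q. \<forall>a\<in>\<Sigma>. \<delta> q a \<in> Q) \<and> F \<subseteq> Q \<and>
      L = {w \<in> lists \<Sigma>. foldl \<delta> q0 w \<in> F})"

definition lderiv :: "'a list \<Rightarrow> 'a list set \<Rightarrow> 'a list set" where
  "lderiv u L = {w. u @ w \<in> L}"

definition lderivs :: "'a list set \<Rightarrow> 'a list set \<Rightarrow> 'a list set" where
  "lderivs U L = (\<Union>u\<in>U. lderiv u L)"

definition revL :: "'a list set \<Rightarrow> 'a list set" where
  "revL K = rev ` K"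

definition compl :: "'a set \<Rightarrow> 'a list set \<Rightarrow> 'a list set" where
  "compl \<Sigma> K = lists \<Sigma> - K"

definition LQ :: "'a set \<Rightarrow> 'a list set \<Rightarrow> 'a list set set" where
  "LQ \<Sigma> L = {\<Union>S | S. finite S \<and> S \<subseteq> {lderiv u L | u. u \<in> lists \<Sigma>}}"

definition is_sup :: "'b set set \<Rightarrow> 'b set \<Rightarrow> 'b set \<Rightarrow> 'b set \<Rightarrow> bool" where
  "is_sup S x y m \<longleftrightarrow> m \<in> S \<and> x \<subseteq> m \<and> y \<subseteq> m \<and> (\<forall>z\<in>S. x \<subseteq> z \<and> y \<subseteq> z \<longrightarrow> m \<subseteq> z)"

definition is_inf :: "'b set set \<Rightarrow> 'b set \<Rightarrow> 'b set \<Rightarrow> 'b set \<Rightarrow> bool" where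
  "is_inf S x y m \<longleftrightarrow> m \<in> S \<and> m \<subseteq> x \<and> m \<subseteq> y \<and> (\<forall>z\<in>S. z \<subseteq> x \<and> z \<subseteq> y \<longrightarrow> z \<subseteq> m)"

definition supS :: "'b set set \<Rightarrow> 'b set \<Rightarrow> 'b set \<Rightarrow> 'b set" where
  "supS S x y = (THE m. is_sup S x y m)"

definition infS :: "'b set set \<Rightarrow> 'b set \<Rightarrow> 'b set \<Rightarrow> 'b set" where
  "infS S x y = (THE m. is_inf S x y m)"

definition botS :: "'b set set \<Rightarrow> 'b set" where
  "botS S = (THE b. b \<in> S \<and> (\<forall>y\<in>S. b \<subseteq> y))"

definition distributive_lattice :: "'b set set \<Rightarrow> bool" where
  "distributive_lattice S \<longleftrightarrow>
     (\<forall>x\<in>S. \<forall>y\<in>S. (\<exists>m. is_sup S x y m) \<and> (\<exists>m. is_inf S x y m)) \<and>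
     (\<forall>x\<in>S. \<forall>y\<in>S. \<forall>z\<in>S. infS S x (supS S y z) = supS S (infS S x y) (infS S x z))"

definition JI :: "'b set set \<Rightarrow> 'b set set" where
  "JI S = {x \<in> S. x \<noteq> botS S \<and> (\<forall>y\<in>S. \<forall>z\<in>S. x = supS S y z \<longrightarrow> x = y \<or> x = z)}"

record ('s, 'a) nfa =
  states :: "'s set"
  trans :: "('s \<times> 'a \<times> 's) set"
  init :: "'s set"
  final :: "'s set"

definition nfa_rev :: "('s, 'a) nfa \<Rightarrow> ('s, 'a) nfa" where
  "nfa_rev N = \<lparr> states = states N, trans = {(q, a, p). (p, a, q) \<in> trans N},
                 init = final N, final = init N \<rparr>"

definition nfa_iso :: "('s \<Rightarrow> 't) \<Rightarrow> ('s, 'a) nfa \<Rightarrow> ('t, 'a) nfa \<Rightarrow> bool" where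
  "nfa_iso f N M \<longleftrightarrow> bij_betw f (states N) (states M) \<and>
     (\<forall>p\<in>states N. \<forall>q\<in>states N. \<forall>a. (p, a, q) \<in> trans N \<longleftrightarrow> (f p, a, f q) \<in> trans M) \<and>
     (\<forall>p\<in>states N. p \<in> init N \<longleftrightarrow> f p \<in> init M) \<and>
     (\<forall>p\<in>states N. p \<in> final N \<longleftrightarrow> f p \<in> final M)"

definition nfa_isomorphic :: "('s, 'a) nfa \<Rightarrow> ('t, 'a) nfa \<Rightarrow> bool" where
  "nfa_isomorphic N M \<longleftrightarrow> (\<exists>f. nfa_iso f N M)"

definition canonical_RFSA :: "'a set \<Rightarrow> 'a list set \<Rightarrow> ('a list set, 'a) nfa" where
  "canonical_RFSA \<Sigma> L = \<lparr> states = JI (LQ \<Sigma> L),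
     trans = {(X, a, Y). X \<in> JI (LQ \<Sigma> L) \<and> Y \<in> JI (LQ \<Sigma> L) \<and> a \<in> \<Sigma> \<and> Y \<subseteq> lderiv [a] X},
     init = {X \<in> JI (LQ \<Sigma> L). X \<subseteq> L},
     final = {X \<in> JI (LQ \<Sigma> L). [] \<in> X} \<rparr>"

definition topological :: "'a set \<Rightarrow> 'a list set \<Rightarrow> bool" where
  "topological \<Sigma> L \<longleftrightarrow> distributive_lattice (LQ \<Sigma> L)"

definition biRFSA :: "'a set \<Rightarrow> 'a list set \<Rightarrow> bool" where
  "biRFSA \<Sigma> L \<longleftrightarrow> nfa_isomorphic (canonical_RFSA \<Sigma> L) (nfa_rev (canonical_RFSA \<Sigma> (revL L)))"

definition dr :: "'a set \<Rightarrow> 'a list set \<Rightarrow> 'a list set \<Rightarrow> 'a list set" where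
  "dr \<Sigma> L K = lderivs (compl \<Sigma> (revL K)) L"

definition tau :: "'a set \<Rightarrow> 'a list set \<Rightarrow> 'a list set \<Rightarrow> 'a list set" where
  "tau \<Sigma> L j = \<Union>{X \<in> LQ \<Sigma> L. \<not> j \<subseteq> X}"

definition theta :: "'a set \<Rightarrow> 'a list set \<Rightarrow> 'a list set \<Rightarrow> 'a list set" where
  "theta \<Sigma> L j = (THE k. k \<in> LQ \<Sigma> (revL L) \<and> dr \<Sigma> L k = tau \<Sigma> L j)"

end

theory Submission
  imports Defs
begin

(* A family of sets closed under finite unions is distributive iff each join-irreducible j is
   union-prime, i.e. iff j has a generator: an element v of j such that every member of the
   family containing v contains j.

   In the canonical residual automaton N_M the right language of a state X is X itself, and
   y^{-1}M is the union of the states reached by y. So if f is an isomorphism from N_L to the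
   reverse of N_{L^r}, the left language of X is (f X)^r and the left language of f X is X^r.
   Writing f X = y^{-1}L^r, join-irreducibility forces f X to be reached by y, so rev y \<in> X;
   and whenever u rev y \<in> L, rev u lies in f X, so u reaches X and X \<subseteq> u^{-1}L. Thus rev y
   generates X.

   Conversely, if v generates j then {w. j \<subseteq> (rev w)^{-1}L} = (rev v)^{-1}L^r, and dr maps this
   set to \<tau>(j), so it is \<theta>(j). In this description \<theta> is visibly a bijection between the
   join-irreducibles that reverses transitions and exchanges initial and final states. *)

definition union_closed :: "'b set set \<Rightarrow> bool" where
  "union_closed S \<longleftrightarrow> {} \<in> S \<and> (\<forall>x\<in>S. \<forall>y\<in>S. x \<union> y \<in> S)"

definition union_prime :: "'b set set \<Rightarrow> 'b set \<Rightarrow> bool" where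
  "union_prime S j \<longleftrightarrow> (\<forall>A\<in>S. \<forall>B\<in>S. j \<subseteq> A \<union> B \<longrightarrow> j \<subseteq> A \<or> j \<subseteq> B)"

definition is_generator :: "'b set set \<Rightarrow> 'b set \<Rightarrow> 'b \<Rightarrow> bool" where
  "is_generator S X v \<longleftrightarrow> v \<in> X \<and> (\<forall>C\<in>S. v \<in> C \<longrightarrow> X \<subseteq> C)"

lemma union_closed_Union:
  assumes "union_closed S" "finite T" "T \<subseteq> S"
  shows "\<Union>T \<in> S"
  using assms(2,3) by (induction T rule: finite_induct) (use assms(1) in \<open>auto simp: union_closed_def\<close>)

lemma supS_eq_Un: "union_closed S \<Longrightarrow> x \<in> S \<Longrightarrow> y \<in> S \<Longrightarrow> supS S x y = x \<union> y"
  unfolding supS_def by (rule the_equality) (auto simp: is_sup_def union_closed_def)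

lemma infS_eq_Union:
  assumes "union_closed S" "finite S" "x \<in> S" "y \<in> S"
  shows "infS S x y = \<Union>{z\<in>S. z \<subseteq> x \<and> z \<subseteq> y}" (is "_ = ?m")
proof -
  have "?m \<in> S"
    using assms by (intro union_closed_Union) auto
  then have "is_inf S x y ?m"
    unfolding is_inf_def by blast
  then show ?thesis
    unfolding infS_def by (rule the_equality) (auto simp: is_inf_def)
qed

lemma botS_eq_empty: "union_closed S \<Longrightarrow> botS S = {}"
  unfolding botS_def by (rule the_equality) (auto simp: union_closed_def)

lemma JI_union_closed:
  "union_closed S \<Longrightarrow>
     JI S = {x\<in>S. x \<noteq> {} \<and> (\<forall>y\<in>S. \<forall>z\<in>S. x = y \<union> z \<longrightarrow> x = y \<or> x = z)}"
  unfolding JI_def by (auto simp: botS_eq_empty supS_eq_Un)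

lemma JI_subset: "union_closed S \<Longrightarrow> JI S \<subseteq> S"
  by (auto simp: JI_union_closed)

lemma JI_nonempty: "union_closed S \<Longrightarrow> x \<in> JI S \<Longrightarrow> x \<noteq> {}"
  by (auto simp: JI_union_closed)

lemma JI_mem_of_Union:
  assumes S: "union_closed S" and x: "x \<in> JI S" and T: "finite T" "T \<subseteq> S" "x = \<Union>T"
  shows "x \<in> T"
  using T
proof (induction T rule: finite_induct)
  case empty
  then show ?case using JI_nonempty[OF S x] by simp
next
  case (insert t T)
  then have "x = t \<or> x = \<Union>T"
    using x union_closed_Union[OF S, of T] unfolding JI_union_closed[OF S] by auto
  then show ?case using insert by auto
qed

lemma union_prime_subset_Union:
  assumes S: "union_closed S" and j: "j \<in> JI S" "union_prime S j"
    and T: "finite T" "T \<subseteq> S" "j \<subseteq> \<Union>T"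
  shows "\<exists>t\<in>T. j \<subseteq> t"
  using T
proof (induction T rule: finite_induct)
  case empty
  then show ?case using JI_nonempty[OF S j(1)] by simp
next
  case (insert t T)
  then have "j \<subseteq> t \<or> j \<subseteq> \<Union>T"
    using j(2) union_closed_Union[OF S, of T] unfolding union_prime_def by auto
  then show ?case using insert by auto
qed

text \<open>A minimal element of S containing x cannot split into two smaller ones.\<close>
lemma JI_coverE:
  assumes S: "union_closed S" "finite S" and Z: "Z \<in> S" "x \<in> Z"
  obtains j where "j \<in> JI S" "j \<subseteq> Z" "x \<in> j"
proof -
  obtain j where j: "j \<in> S" "x \<in> j" "j \<subseteq> Z"
    and min: "\<And>y. y \<in> S \<Longrightarrow> x \<in> y \<Longrightarrow> y \<subseteq> j \<Longrightarrow> y = j"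
    using finite_has_minimal2[of "{y\<in>S. x \<in> y}" Z] S(2) Z by auto
  have "j \<in> JI S"
    unfolding JI_union_closed[OF S(1)] using j min by blast
  with j that show ?thesis by blast
qed

lemma generator_imp_JI:
  assumes "union_closed S" "X \<in> S" "is_generator S X v"
  shows "X \<in> JI S"
  using assms unfolding JI_union_closed[OF assms(1)] is_generator_def by blast

lemma union_prime_iff_generator:
  assumes S: "union_closed S" "finite S" and X: "X \<in> JI S"
  shows "union_prime S X \<longleftrightarrow> (\<exists>v. is_generator S X v)"
proof
  assume prime: "union_prime S X"
  show "\<exists>v. is_generator S X v"
  proof (rule ccontr)
    assume "\<nexists>v. is_generator S X v"
    then have "X \<subseteq> \<Union>{C\<in>S. \<not> X \<subseteq> C}"
      unfolding is_generator_def by blast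
    then show False
      using union_prime_subset_Union[OF S(1) X prime, of "{C\<in>S. \<not> X \<subseteq> C}"] S(2) by auto
  qed
next
  assume "\<exists>v. is_generator S X v"
  then show "union_prime S X"
    unfolding union_prime_def is_generator_def by blast
qed

lemma distributive_imp_union_prime:
  assumes S: "union_closed S" "finite S" and d: "distributive_lattice S" and j: "j \<in> JI S"
  shows "union_prime S j"
  unfolding union_prime_def
proof (intro ballI impI)
  fix A B assume AB: "A \<in> S" "B \<in> S" "j \<subseteq> A \<union> B"
  have jS: "j \<in> S" using j JI_subset[OF S(1)] by blast
  let ?jA = "\<Union>{z\<in>S. z \<subseteq> j \<and> z \<subseteq> A}" and ?jB = "\<Union>{z\<in>S. z \<subseteq> j \<and> z \<subseteq> B}"
  have "A \<union> B \<in> S" using S(1) AB unfolding union_closed_def by blast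
  then have "infS S j (supS S A B) = j"
    using infS_eq_Union[OF S jS] supS_eq_Un[OF S(1) AB(1,2)] AB(3) jS by auto
  moreover have "?jA \<in> S" "?jB \<in> S"
    using S by (auto intro: union_closed_Union)
  moreover have "infS S j (supS S A B) = supS S (infS S j A) (infS S j B)"
    using d jS AB unfolding distributive_lattice_def by blast
  ultimately have "j = ?jA \<union> ?jB"
    using infS_eq_Union[OF S jS] AB supS_eq_Un[OF S(1)] by auto
  then have "j = ?jA \<or> j = ?jB"
    using j \<open>?jA \<in> S\<close> \<open>?jB \<in> S\<close> unfolding JI_union_closed[OF S(1)] by blast
  then show "j \<subseteq> A \<or> j \<subseteq> B" by blast
qed

lemma union_prime_imp_distributive:
  assumes S: "union_closed S" "finite S" and prime: "\<forall>j\<in>JI S. union_prime S j"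
  shows "distributive_lattice S"
  unfolding distributive_lattice_def
proof (intro conjI ballI)
  fix x y assume "x \<in> S" "y \<in> S"
  then show "\<exists>m. is_sup S x y m"
    using S(1) unfolding is_sup_def union_closed_def by blast
  show "\<exists>m. is_inf S x y m"
    using infS_eq_Union[OF S \<open>x \<in> S\<close> \<open>y \<in> S\<close>] union_closed_Union[OF S(1)] S(2)
    unfolding is_inf_def by (intro exI[of _ "\<Union>{z\<in>S. z \<subseteq> x \<and> z \<subseteq> y}"]) auto
next
  fix x y z assume xyz: "x \<in> S" "y \<in> S" "z \<in> S"
  let ?inf = "\<lambda>q. \<Union>{w\<in>S. w \<subseteq> x \<and> w \<subseteq> q}"
  have "?inf (y \<union> z) \<subseteq> ?inf y \<union> ?inf z"
  proof
    fix e assume "e \<in> ?inf (y \<union> z)"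
    then obtain w where w: "w \<in> S" "w \<subseteq> x" "w \<subseteq> y \<union> z" "e \<in> w" by blast
    then obtain j where j: "j \<in> JI S" "j \<subseteq> w" "e \<in> j"
      using JI_coverE[OF S] by metis
    then have "j \<in> S" "j \<subseteq> y \<or> j \<subseteq> z"
      using JI_subset[OF S(1)] prime xyz(2,3) w(3) unfolding union_prime_def by blast+
    then show "e \<in> ?inf y \<union> ?inf z"
      using j w by blast
  qed
  then have "?inf (y \<union> z) = ?inf y \<union> ?inf z" by blast
  moreover have "y \<union> z \<in> S" "?inf y \<in> S" "?inf z \<in> S"
    using S xyz unfolding union_closed_def by (auto intro: union_closed_Union[OF S(1)])
  ultimately show "infS S x (supS S y z) = supS S (infS S x y) (infS S x z)"
    using infS_eq_Union[OF S] supS_eq_Un[OF S(1)] xyz by simp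
qed

lemma distributive_iff_generators:
  assumes "union_closed S" "finite S"
  shows "distributive_lattice S \<longleftrightarrow> (\<forall>j\<in>JI S. \<exists>v. is_generator S j v)"
  using assms distributive_imp_union_prime union_prime_imp_distributive union_prime_iff_generator
  by metis

definition derivs :: "'a set \<Rightarrow> 'a list set \<Rightarrow> 'a list set set" where
  "derivs \<Sigma> M = {lderiv u M | u. u \<in> lists \<Sigma>}"

lemma lderiv_Nil [simp]: "lderiv [] M = M"
  by (simp add: lderiv_def)

lemma lderiv_lderiv [simp]: "lderiv v (lderiv u M) = lderiv (u @ v) M"
  by (auto simp: lderiv_def)

lemma lderiv_mono: "A \<subseteq> B \<Longrightarrow> lderiv u A \<subseteq> lderiv u B"
  by (auto simp: lderiv_def)

lemma lderiv_Union: "lderiv u (\<Union>S) = \<Union>(lderiv u ` S)"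
  by (auto simp: lderiv_def)

lemma in_lderiv_iff [simp]: "w \<in> lderiv u M \<longleftrightarrow> u @ w \<in> M"
  by (simp add: lderiv_def)

lemma in_revL_iff [simp]: "w \<in> revL K \<longleftrightarrow> rev w \<in> K"
  by (force simp: revL_def)

lemma rev_in_lists_iff [simp]: "rev w \<in> lists A \<longleftrightarrow> w \<in> lists A"
  by (auto simp: in_lists_conv_set)

lemma revL_revL [simp]: "revL (revL K) = K"
  by (simp add: revL_def image_comp)

lemma revL_subset_lists: "M \<subseteq> lists \<Sigma> \<Longrightarrow> revL M \<subseteq> lists \<Sigma>"
  by (auto simp: revL_def)

lemma regular_subset_lists: "regular \<Sigma> L \<Longrightarrow> L \<subseteq> lists \<Sigma>"
  by (auto simp: regular_def)

lemma foldl_closed: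
  "\<forall>q\<in>Q. \<forall>a\<in>\<Sigma>. \<delta> q a \<in> Q \<Longrightarrow> q \<in> Q \<Longrightarrow> w \<in> lists \<Sigma> \<Longrightarrow> foldl \<delta> q w \<in> Q"
  by (induction w arbitrary: q) auto

lemma regular_finite_derivs:
  assumes "regular \<Sigma> L"
  shows "finite (derivs \<Sigma> L)"
proof -
  obtain Q :: "nat set" and q0 \<delta> F where Q: "finite Q" "q0 \<in> Q" "\<forall>q\<in>Q. \<forall>a\<in>\<Sigma>. \<delta> q a \<in> Q"
    and L: "L = {w \<in> lists \<Sigma>. foldl \<delta> q0 w \<in> F}"
    using assms unfolding regular_def by blast
  have "lderiv u L = {w \<in> lists \<Sigma>. foldl \<delta> (foldl \<delta> q0 u) w \<in> F}" if "u \<in> lists \<Sigma>" for u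
    using that L by auto
  then have "derivs \<Sigma> L \<subseteq> (\<lambda>q. {w \<in> lists \<Sigma>. foldl \<delta> q w \<in> F}) ` Q"
    unfolding derivs_def using foldl_closed[OF Q(3,2)] by blast
  then show ?thesis
    using Q(1) by (simp add: finite_surj)
qed

text \<open>A derivative of the reversed language is determined by which derivatives of M contain
  the reversed word.\<close>
lemma finite_derivs_revL:
  assumes M: "M \<subseteq> lists \<Sigma>" and fin: "finite (derivs \<Sigma> M)"
  shows "finite (derivs \<Sigma> (revL M))"
proof -
  let ?lang = "\<lambda>P. {w \<in> lists \<Sigma>. lderiv (rev w) M \<in> P}"
  have lang_eq: "lderiv y (revL M) = ?lang {D \<in> derivs \<Sigma> M. rev y \<in> D}" for y
  proof (intro set_eqI iffI)
    fix w assume "w \<in> lderiv y (revL M)"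
    then have wy: "rev w @ rev y \<in> M" by simp
    then have "rev w \<in> lists \<Sigma>" using M by auto
    then have "lderiv (rev w) M \<in> derivs \<Sigma> M" "w \<in> lists \<Sigma>"
      unfolding derivs_def by auto
    with wy show "w \<in> ?lang {D \<in> derivs \<Sigma> M. rev y \<in> D}" by simp
  qed simp
  have "derivs \<Sigma> (revL M) \<subseteq> ?lang ` Pow (derivs \<Sigma> M)"
  proof
    fix K assume "K \<in> derivs \<Sigma> (revL M)"
    then obtain y where "K = lderiv y (revL M)"
      unfolding derivs_def by blast
    then show "K \<in> ?lang ` Pow (derivs \<Sigma> M)"
      unfolding lang_eq by (intro image_eqI[of _ _ "{D \<in> derivs \<Sigma> M. rev y \<in> D}"]) auto
  qed
  then show ?thesis
    using fin by (meson finite_Pow_iff finite_surj)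
qed

lemma LQ_eq: "LQ \<Sigma> M = {\<Union>S | S. finite S \<and> S \<subseteq> derivs \<Sigma> M}"
  by (simp add: LQ_def derivs_def)

lemma union_closed_LQ: "union_closed (LQ \<Sigma> M)"
  unfolding union_closed_def LQ_eq
proof (intro conjI ballI)
  fix x y assume "x \<in> {\<Union>S | S. finite S \<and> S \<subseteq> derivs \<Sigma> M}" "y \<in> {\<Union>S | S. finite S \<and> S \<subseteq> derivs \<Sigma> M}"
  then obtain S T where "finite S" "S \<subseteq> derivs \<Sigma> M" "x = \<Union>S" "finite T" "T \<subseteq> derivs \<Sigma> M" "y = \<Union>T"
    by blast
  then show "x \<union> y \<in> {\<Union>S | S. finite S \<and> S \<subseteq> derivs \<Sigma> M}"
    by (intro CollectI exI[of _ "S \<union> T"]) auto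
qed (use finite.emptyI in blast)

lemma finite_LQ: "finite (derivs \<Sigma> M) \<Longrightarrow> finite (LQ \<Sigma> M)"
  unfolding LQ_eq by (rule finite_subset[of _ "Union ` Pow (derivs \<Sigma> M)"]) auto

lemma lderiv_in_LQ: "u \<in> lists \<Sigma> \<Longrightarrow> lderiv u M \<in> LQ \<Sigma> M"
  unfolding LQ_eq derivs_def by (intro CollectI exI[of _ "{lderiv u M}"]) auto

lemma LQ_memE:
  assumes "X \<in> LQ \<Sigma> M" "w \<in> X"
  obtains u where "u \<in> lists \<Sigma>" "w \<in> lderiv u M" "lderiv u M \<subseteq> X"
  using assms unfolding LQ_eq derivs_def by blast

lemma LQ_subset_lists: "M \<subseteq> lists \<Sigma> \<Longrightarrow> X \<in> LQ \<Sigma> M \<Longrightarrow> X \<subseteq> lists \<Sigma>"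
  by (auto elim!: LQ_memE)

lemma LQ_lderiv_closed:
  assumes "X \<in> LQ \<Sigma> M" "v \<in> lists \<Sigma>"
  shows "lderiv v X \<in> LQ \<Sigma> M"
proof -
  obtain S where S: "finite S" "S \<subseteq> derivs \<Sigma> M" "X = \<Union>S"
    using assms(1) unfolding LQ_eq by blast
  have "lderiv v ` S \<subseteq> derivs \<Sigma> M"
    using S(2) assms(2) unfolding derivs_def by force
  then show ?thesis
    unfolding LQ_eq S(3) lderiv_Union using S(1) by blast
qed

lemma derivs_subset_LQ: "derivs \<Sigma> M \<subseteq> LQ \<Sigma> M"
  unfolding derivs_def by (auto intro!: lderiv_in_LQ)

lemma JI_LQ_subset: "JI (LQ \<Sigma> M) \<subseteq> LQ \<Sigma> M"
  by (rule JI_subset[OF union_closed_LQ])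

lemma JI_LQ_is_lderiv:
  assumes X: "X \<in> JI (LQ \<Sigma> M)"
  obtains u where "u \<in> lists \<Sigma>" "X = lderiv u M"
proof -
  have "X \<in> LQ \<Sigma> M"
    using JI_LQ_subset X by (rule subsetD)
  then obtain S where S: "finite S" "S \<subseteq> derivs \<Sigma> M" "X = \<Union>S"
    unfolding LQ_eq by blast
  moreover have "S \<subseteq> LQ \<Sigma> M"
    using S(2) derivs_subset_LQ by (rule order_trans)
  ultimately have "X \<in> derivs \<Sigma> M"
    using JI_mem_of_Union[OF union_closed_LQ X, of S] by blast
  then show ?thesis
    unfolding derivs_def using that by blast
qed

lemma is_generator_LQ_iff:
  "is_generator (LQ \<Sigma> M) X v \<longleftrightarrow> v \<in> X \<and> (\<forall>u\<in>lists \<Sigma>. u @ v \<in> M \<longrightarrow> X \<subseteq> lderiv u M)"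
proof -
  have suff: "X \<subseteq> C"
    if X: "\<forall>u\<in>lists \<Sigma>. u @ v \<in> M \<longrightarrow> X \<subseteq> lderiv u M" and C: "C \<in> LQ \<Sigma> M" "v \<in> C" for C
  proof -
    obtain u where u: "u \<in> lists \<Sigma>" "v \<in> lderiv u M" "lderiv u M \<subseteq> C"
      using LQ_memE[OF C] .
    from u(2) have "u @ v \<in> M" by simp
    with X u(1) have "X \<subseteq> lderiv u M" by blast
    with u(3) show ?thesis by (rule subset_trans[rotated])
  qed
  have nec: "X \<subseteq> lderiv u M"
    if "is_generator (LQ \<Sigma> M) X v" "u \<in> lists \<Sigma>" "u @ v \<in> M" for u
  proof -
    have "lderiv u M \<in> LQ \<Sigma> M" "v \<in> lderiv u M"
      using that(2,3) by (simp_all add: lderiv_in_LQ)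
    with that(1) show ?thesis
      unfolding is_generator_def by blast
  qed
  show ?thesis
  proof
    assume "is_generator (LQ \<Sigma> M) X v"
    then show "v \<in> X \<and> (\<forall>u\<in>lists \<Sigma>. u @ v \<in> M \<longrightarrow> X \<subseteq> lderiv u M)"
      using nec unfolding is_generator_def by simp
  next
    assume "v \<in> X \<and> (\<forall>u\<in>lists \<Sigma>. u @ v \<in> M \<longrightarrow> X \<subseteq> lderiv u M)"
    then show "is_generator (LQ \<Sigma> M) X v"
      using suff unfolding is_generator_def by simp
  qed
qed

fun path :: "('s \<times> 'a \<times> 's) set \<Rightarrow> 's \<Rightarrow> 'a list \<Rightarrow> 's \<Rightarrow> bool" where
  "path T p [] q \<longleftrightarrow> p = q"
| "path T p (a # w) q \<longleftrightarrow> (\<exists>r. (p, a, r) \<in> T \<and> path T r w q)"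

definition right_lang :: "('s, 'a) nfa \<Rightarrow> 's \<Rightarrow> 'a list set" where
  "right_lang N q = {w. \<exists>q'\<in>final N. path (trans N) q w q'}"

definition left_lang :: "('s, 'a) nfa \<Rightarrow> 's \<Rightarrow> 'a list set" where
  "left_lang N q = {w. \<exists>p\<in>init N. path (trans N) p w q}"

definition nfa_wf :: "('s, 'a) nfa \<Rightarrow> bool" where
  "nfa_wf N \<longleftrightarrow> trans N \<subseteq> states N \<times> UNIV \<times> states N \<and> init N \<subseteq> states N \<and> final N \<subseteq> states N"

lemma path_append: "path T p (u @ w) q \<longleftrightarrow> (\<exists>r. path T p u r \<and> path T r w q)"
  by (induction u arbitrary: p) auto

lemma path_converse: "path {(q, a, p). (p, a, q) \<in> T} p w q \<longleftrightarrow> path T q (rev w) p"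
  by (induction w arbitrary: p) (auto simp: path_append)

lemma path_target_state:
  assumes "path T p w q" "T \<subseteq> S \<times> UNIV \<times> S" "p \<in> S"
  shows "q \<in> S"
  using assms by (induction w arbitrary: p) auto

lemma Nil_in_right_lang [simp]: "[] \<in> right_lang N q \<longleftrightarrow> q \<in> final N"
  by (simp add: right_lang_def)

lemma Cons_in_right_lang [simp]:
  "a # w \<in> right_lang N q \<longleftrightarrow> (\<exists>r. (q, a, r) \<in> trans N \<and> w \<in> right_lang N r)"
  by (auto simp: right_lang_def)

lemma right_lang_nfa_rev: "right_lang (nfa_rev N) q = revL (left_lang N q)"
  by (auto simp: right_lang_def left_lang_def nfa_rev_def path_converse)

lemma left_lang_nfa_rev: "left_lang (nfa_rev N) q = revL (right_lang N q)"
  by (auto simp: right_lang_def left_lang_def nfa_rev_def path_converse)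

lemma nfa_wf_rev: "nfa_wf N \<Longrightarrow> nfa_wf (nfa_rev N)"
  by (auto simp: nfa_wf_def nfa_rev_def)

lemma nfa_iso_image:
  assumes iso: "nfa_iso f N M" and wf: "nfa_wf N" "nfa_wf M"
  shows "states M = f ` states N" "init M = f ` init N" "final M = f ` final N"
proof -
  show st: "states M = f ` states N"
    using iso by (simp add: nfa_iso_def bij_betw_def)
  have "init N \<subseteq> states N" "init M \<subseteq> states M" "final N \<subseteq> states N" "final M \<subseteq> states M"
    using wf by (simp_all add: nfa_wf_def)
  moreover have "\<forall>p\<in>states N. p \<in> init N \<longleftrightarrow> f p \<in> init M" "\<forall>p\<in>states N. p \<in> final N \<longleftrightarrow> f p \<in> final M"
    using iso by (simp_all add: nfa_iso_def)
  ultimately show "init M = f ` init N" "final M = f ` final N"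
    unfolding st by blast+
qed

lemma path_iso:
  assumes iso: "nfa_iso f N M" and wf: "nfa_wf N" "nfa_wf M"
    and pq: "p \<in> states N" "q \<in> states N"
  shows "path (trans N) p w q \<longleftrightarrow> path (trans M) (f p) w (f q)"
  using pq(1)
proof (induction w arbitrary: p)
  case Nil
  have "inj_on f (states N)"
    using iso by (simp add: nfa_iso_def bij_betw_def)
  with Nil pq(2) show ?case
    by (auto dest: inj_onD)
next
  case (Cons a w)
  have tr: "(p, a, r) \<in> trans N \<longleftrightarrow> (f p, a, f r) \<in> trans M" if "r \<in> states N" for r
    using iso Cons.prems that by (simp add: nfa_iso_def)
  have TN: "trans N \<subseteq> states N \<times> UNIV \<times> states N" and TM: "trans M \<subseteq> states M \<times> UNIV \<times> states M"
    using wf by (simp_all add: nfa_wf_def)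
  show ?case
  proof
    assume "path (trans N) p (a # w) q"
    then obtain r where r: "(p, a, r) \<in> trans N" "path (trans N) r w q" by auto
    with TN have "r \<in> states N" by blast
    with r tr Cons.IH show "path (trans M) (f p) (a # w) (f q)" by auto
  next
    assume "path (trans M) (f p) (a # w) (f q)"
    then obtain r' where r': "(f p, a, r') \<in> trans M" "path (trans M) r' w (f q)" by auto
    with TM nfa_iso_image(1)[OF iso wf] obtain r where "r \<in> states N" "r' = f r" by blast
    with r' tr Cons.IH show "path (trans N) p (a # w) q" by auto
  qed
qed

lemma
  assumes iso: "nfa_iso f N M" and wf: "nfa_wf N" "nfa_wf M" and q: "q \<in> states N"
  shows right_lang_iso: "right_lang M (f q) = right_lang N q"
    and left_lang_iso: "left_lang M (f q) = left_lang N q"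
proof -
  have "final N \<subseteq> states N" "init N \<subseteq> states N"
    using wf(1) by (simp_all add: nfa_wf_def)
  then show "right_lang M (f q) = right_lang N q" "left_lang M (f q) = left_lang N q"
    unfolding right_lang_def left_lang_def nfa_iso_image[OF iso wf]
    using path_iso[OF iso wf] q by blast+
qed

lemma trans_canonical_RFSA:
  "(X, a, Y) \<in> trans (canonical_RFSA \<Sigma> M) \<longleftrightarrow>
     X \<in> JI (LQ \<Sigma> M) \<and> Y \<in> JI (LQ \<Sigma> M) \<and> a \<in> \<Sigma> \<and> Y \<subseteq> lderiv [a] X"
  by (simp add: canonical_RFSA_def)

lemma nfa_wf_canonical_RFSA: "nfa_wf (canonical_RFSA \<Sigma> M)"
  by (auto simp: nfa_wf_def canonical_RFSA_def)

lemma path_canonical_RFSA_subset: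
  "path (trans (canonical_RFSA \<Sigma> M)) p w q \<Longrightarrow> q \<subseteq> lderiv w p"
proof (induction w arbitrary: p)
  case (Cons a w)
  then obtain r where "r \<subseteq> lderiv [a] p" "q \<subseteq> lderiv w r"
    by (auto simp: trans_canonical_RFSA)
  then show ?case
    using lderiv_mono[of r "lderiv [a] p" w] by simp
qed simp

lemma left_lang_canonical_RFSA_subset:
  "u \<in> left_lang (canonical_RFSA \<Sigma> M) X \<Longrightarrow> X \<subseteq> lderiv u M"
  unfolding left_lang_def using path_canonical_RFSA_subset lderiv_mono
  by (fastforce simp: canonical_RFSA_def)

context
  fixes \<Sigma> :: "'a set" and M :: "'a list set"
  assumes M: "M \<subseteq> lists \<Sigma>" and fin: "finite (LQ \<Sigma> M)"
begin

lemma right_lang_canonical_RFSA: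
  "X \<in> JI (LQ \<Sigma> M) \<Longrightarrow> right_lang (canonical_RFSA \<Sigma> M) X = X"
proof (intro set_eqI)
  fix w show "X \<in> JI (LQ \<Sigma> M) \<Longrightarrow> w \<in> right_lang (canonical_RFSA \<Sigma> M) X \<longleftrightarrow> w \<in> X"
  proof (induction w arbitrary: X)
    case Nil
    then show ?case by (simp add: canonical_RFSA_def)
  next
    case (Cons a w)
    have XL: "X \<in> LQ \<Sigma> M"
      using JI_LQ_subset Cons.prems by (rule subsetD)
    have "a # w \<in> X \<longleftrightarrow> (\<exists>Y\<in>JI (LQ \<Sigma> M). a \<in> \<Sigma> \<and> Y \<subseteq> lderiv [a] X \<and> w \<in> Y)"
    proof
      assume aw: "a # w \<in> X"
      then have a: "a \<in> \<Sigma>"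
        using LQ_subset_lists[OF M XL] by auto
      then have "lderiv [a] X \<in> LQ \<Sigma> M"
        using LQ_lderiv_closed[OF XL] by simp
      moreover have "w \<in> lderiv [a] X"
        using aw by simp
      ultimately obtain Y where "Y \<in> JI (LQ \<Sigma> M)" "Y \<subseteq> lderiv [a] X" "w \<in> Y"
        by (rule JI_coverE[OF union_closed_LQ fin])
      with a show "\<exists>Y\<in>JI (LQ \<Sigma> M). a \<in> \<Sigma> \<and> Y \<subseteq> lderiv [a] X \<and> w \<in> Y"
        by blast
    qed auto
    then show ?case
      using Cons by (auto simp: trans_canonical_RFSA)
  qed
qed

lemma lderiv_eq_Union_left_lang:
  "lderiv u M = \<Union>{X \<in> JI (LQ \<Sigma> M). u \<in> left_lang (canonical_RFSA \<Sigma> M) X}"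
proof (intro equalityI subsetI)
  fix w assume "w \<in> lderiv u M"
  have "M \<in> LQ \<Sigma> M"
    using lderiv_in_LQ[of "[]" \<Sigma> M] by simp
  moreover from \<open>w \<in> lderiv u M\<close> have "u @ w \<in> M" by simp
  ultimately obtain p where p: "p \<in> JI (LQ \<Sigma> M)" "p \<subseteq> M" "u @ w \<in> p"
    by (rule JI_coverE[OF union_closed_LQ fin])
  then have "u @ w \<in> right_lang (canonical_RFSA \<Sigma> M) p"
    using right_lang_canonical_RFSA by simp
  then obtain q where q: "q \<in> final (canonical_RFSA \<Sigma> M)"
    "path (trans (canonical_RFSA \<Sigma> M)) p (u @ w) q"
    unfolding right_lang_def by blast
  then obtain X where X: "path (trans (canonical_RFSA \<Sigma> M)) p u X"
    "path (trans (canonical_RFSA \<Sigma> M)) X w q"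
    unfolding path_append by blast
  have XJ: "X \<in> JI (LQ \<Sigma> M)"
    by (rule path_target_state[OF X(1) _ p(1)]) (auto simp: trans_canonical_RFSA)
  have "u \<in> left_lang (canonical_RFSA \<Sigma> M) X"
    using p X(1) by (auto simp: left_lang_def canonical_RFSA_def)
  moreover have "w \<in> right_lang (canonical_RFSA \<Sigma> M) X"
    using q X(2) unfolding right_lang_def by blast
  then have "w \<in> X"
    using right_lang_canonical_RFSA[OF XJ] by simp
  ultimately show "w \<in> \<Union>{X \<in> JI (LQ \<Sigma> M). u \<in> left_lang (canonical_RFSA \<Sigma> M) X}"
    using XJ by blast
next
  fix w assume "w \<in> \<Union>{X \<in> JI (LQ \<Sigma> M). u \<in> left_lang (canonical_RFSA \<Sigma> M) X}"
  then show "w \<in> lderiv u M"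
    using left_lang_canonical_RFSA_subset by blast
qed

end

lemma
  assumes M: "M \<subseteq> lists \<Sigma>" and finM: "finite (LQ \<Sigma> M)" and finR: "finite (LQ \<Sigma> (revL M))"
    and iso: "nfa_iso f (canonical_RFSA \<Sigma> M) (nfa_rev (canonical_RFSA \<Sigma> (revL M)))"
    and X: "X \<in> JI (LQ \<Sigma> M)"
  shows nfa_iso_rev_JI: "f X \<in> JI (LQ \<Sigma> (revL M))"
    and left_lang_eq_revL_iso: "left_lang (canonical_RFSA \<Sigma> M) X = revL (f X)"
    and left_lang_iso_eq_revL: "left_lang (canonical_RFSA \<Sigma> (revL M)) (f X) = revL X"
proof -
  let ?N = "canonical_RFSA \<Sigma> M" and ?R = "canonical_RFSA \<Sigma> (revL M)"
  have wf: "nfa_wf ?N" "nfa_wf (nfa_rev ?R)"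
    by (simp_all add: nfa_wf_canonical_RFSA nfa_wf_rev)
  have XN: "X \<in> states ?N"
    using X by (simp add: canonical_RFSA_def)
  then show fX: "f X \<in> JI (LQ \<Sigma> (revL M))"
    using nfa_iso_image(1)[OF iso wf] by (simp add: nfa_rev_def canonical_RFSA_def)
  show "left_lang ?N X = revL (f X)"
    using left_lang_iso[OF iso wf XN] right_lang_canonical_RFSA[OF revL_subset_lists[OF M] finR fX]
    by (simp add: left_lang_nfa_rev)
  have "revL X = revL (right_lang (nfa_rev ?R) (f X))"
    using right_lang_iso[OF iso wf XN] right_lang_canonical_RFSA[OF M finM X] by simp
  then show "left_lang ?R (f X) = revL X"
    by (simp add: right_lang_nfa_rev)
qed

lemma nfa_iso_rev_generator:
  assumes M: "M \<subseteq> lists \<Sigma>" and finM: "finite (LQ \<Sigma> M)" and finR: "finite (LQ \<Sigma> (revL M))"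
    and iso: "nfa_iso f (canonical_RFSA \<Sigma> M) (nfa_rev (canonical_RFSA \<Sigma> (revL M)))"
    and X: "X \<in> JI (LQ \<Sigma> M)"
  shows "\<exists>v. is_generator (LQ \<Sigma> M) X v"
proof -
  let ?R = "canonical_RFSA \<Sigma> (revL M)"
  note fX = nfa_iso_rev_JI[OF assms]
  obtain y where y: "y \<in> lists \<Sigma>" "f X = lderiv y (revL M)"
    using JI_LQ_is_lderiv[OF fX] .
  let ?Y = "{Y \<in> JI (LQ \<Sigma> (revL M)). y \<in> left_lang ?R Y}"
  have "?Y \<subseteq> LQ \<Sigma> (revL M)"
    using JI_LQ_subset by blast
  moreover have "f X = \<Union>?Y"
    using y(2) lderiv_eq_Union_left_lang[OF revL_subset_lists[OF M] finR] by simp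
  ultimately have "f X \<in> ?Y"
    using JI_mem_of_Union[OF union_closed_LQ fX] finite_subset[OF _ finR] by blast
  then have "rev y \<in> X"
    using left_lang_iso_eq_revL[OF assms] by simp
  moreover have "X \<subseteq> lderiv u M" if "u @ rev y \<in> M" for u
  proof -
    have "rev u \<in> f X"
      using that y(2) by simp
    then show ?thesis
      using left_lang_eq_revL_iso[OF assms] left_lang_canonical_RFSA_subset by fastforce
  qed
  ultimately show ?thesis
    unfolding is_generator_LQ_iff by blast
qed

lemma tau_eq: "tau \<Sigma> L j = {w. \<exists>u\<in>lists \<Sigma>. \<not> j \<subseteq> lderiv u L \<and> u @ w \<in> L}"
proof (intro equalityI subsetI CollectI)
  fix w assume "w \<in> tau \<Sigma> L j"
  then obtain X where X: "X \<in> LQ \<Sigma> L" "\<not> j \<subseteq> X" "w \<in> X"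
    unfolding tau_def by blast
  then obtain u where u: "u \<in> lists \<Sigma>" "w \<in> lderiv u L" "lderiv u L \<subseteq> X"
    by (elim LQ_memE)
  from u(3) X(2) have "\<not> j \<subseteq> lderiv u L" by blast
  with u(1,2) show "\<exists>u\<in>lists \<Sigma>. \<not> j \<subseteq> lderiv u L \<and> u @ w \<in> L"
    by - (rule bexI[of _ u], simp_all)
next
  fix w assume "w \<in> {w. \<exists>u\<in>lists \<Sigma>. \<not> j \<subseteq> lderiv u L \<and> u @ w \<in> L}"
  then obtain u where u: "u \<in> lists \<Sigma>" "\<not> j \<subseteq> lderiv u L" "w \<in> lderiv u L"
    by auto
  from u(1) have "lderiv u L \<in> LQ \<Sigma> L" by (rule lderiv_in_LQ)
  with u(2,3) show "w \<in> tau \<Sigma> L j"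
    unfolding tau_def by blast
qed

lemma dr_eq: "dr \<Sigma> L K = {w. \<exists>u\<in>lists \<Sigma>. rev u \<notin> K \<and> u @ w \<in> L}"
  by (auto simp: dr_def lderivs_def compl_def)

lemma rev_mem_iff_dr:
  assumes K: "K \<in> LQ \<Sigma> (revL L)" and u: "u \<in> lists \<Sigma>"
  shows "rev u \<in> K \<longleftrightarrow> (\<exists>v. u @ v \<in> L \<and> v \<notin> dr \<Sigma> L K)"
proof
  assume "rev u \<in> K"
  then obtain y where y: "y \<in> lists \<Sigma>" "rev u \<in> lderiv y (revL L)" "lderiv y (revL L) \<subseteq> K"
    by (rule LQ_memE[OF K])
  have "rev y \<notin> dr \<Sigma> L K"
  proof
    assume "rev y \<in> dr \<Sigma> L K"
    then obtain u' where u': "rev u' \<notin> K" "u' @ rev y \<in> L"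
      unfolding dr_eq by blast
    from u'(2) have "rev u' \<in> lderiv y (revL L)" by simp
    with y(3) u'(1) show False by blast
  qed
  moreover have "u @ rev y \<in> L"
    using y(2) by simp
  ultimately show "\<exists>v. u @ v \<in> L \<and> v \<notin> dr \<Sigma> L K"
    by blast
next
  assume "\<exists>v. u @ v \<in> L \<and> v \<notin> dr \<Sigma> L K"
  then obtain v where v: "u @ v \<in> L" "v \<notin> dr \<Sigma> L K"
    by blast
  show "rev u \<in> K"
  proof (rule ccontr)
    assume "rev u \<notin> K"
    with u v(1) have "v \<in> dr \<Sigma> L K"
      unfolding dr_eq by - (rule CollectI, rule bexI[of _ u], simp_all)
    with v(2) show False ..
  qed
qed

lemma inj_on_dr:
  assumes "L \<subseteq> lists \<Sigma>"
  shows "inj_on (dr \<Sigma> L) (LQ \<Sigma> (revL L))"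
proof (rule inj_onI)
  fix K K' assume K: "K \<in> LQ \<Sigma> (revL L)" "K' \<in> LQ \<Sigma> (revL L)" and eq: "dr \<Sigma> L K = dr \<Sigma> L K'"
  have lists: "K \<subseteq> lists \<Sigma>" "K' \<subseteq> lists \<Sigma>"
    using LQ_subset_lists[OF revL_subset_lists[OF assms]] K by simp_all
  have mem: "w \<in> K \<longleftrightarrow> w \<in> K'" if "w \<in> lists \<Sigma>" for w
    using rev_mem_iff_dr[OF K(1), of "rev w"] rev_mem_iff_dr[OF K(2), of "rev w"] that eq by simp
  show "K = K'"
  proof (intro set_eqI)
    fix w show "w \<in> K \<longleftrightarrow> w \<in> K'"
      using lists mem by (meson subsetD)
  qed
qed

lemma theta_eq_lderiv:
  assumes L: "L \<subseteq> lists \<Sigma>" and j: "j \<in> LQ \<Sigma> L" and v: "is_generator (LQ \<Sigma> L) j v"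
  shows "theta \<Sigma> L j = lderiv (rev v) (revL L)"
    and "w \<in> lderiv (rev v) (revL L) \<longleftrightarrow> j \<subseteq> lderiv (rev w) L"
proof -
  let ?K = "lderiv (rev v) (revL L)"
  have v_in: "v \<in> j" and v_gen: "\<And>u. u \<in> lists \<Sigma> \<Longrightarrow> u @ v \<in> L \<Longrightarrow> j \<subseteq> lderiv u L"
    using v unfolding is_generator_LQ_iff by simp_all
  have memK: "w \<in> ?K \<longleftrightarrow> j \<subseteq> lderiv (rev w) L" for w
  proof
    assume "w \<in> ?K"
    then have wv: "rev w @ v \<in> L" by simp
    with L have "rev w \<in> lists \<Sigma>" by auto
    from this wv show "j \<subseteq> lderiv (rev w) L" by (rule v_gen)
  next
    assume "j \<subseteq> lderiv (rev w) L"
    with v_in show "w \<in> ?K" by auto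
  qed
  then show "w \<in> ?K \<longleftrightarrow> j \<subseteq> lderiv (rev w) L" .
  have "v \<in> lists \<Sigma>"
    using LQ_subset_lists[OF L j] v_in by (rule subsetD)
  then have KL: "?K \<in> LQ \<Sigma> (revL L)"
    by (simp add: lderiv_in_LQ)
  have "u @ v \<in> L \<longleftrightarrow> j \<subseteq> lderiv u L" for u
    using memK[of "rev u"] by simp
  then have drK: "dr \<Sigma> L ?K = tau \<Sigma> L j"
    unfolding dr_eq tau_eq by simp
  show "theta \<Sigma> L j = ?K"
    unfolding theta_def
  proof (rule the_equality)
    show "?K \<in> LQ \<Sigma> (revL L) \<and> dr \<Sigma> L ?K = tau \<Sigma> L j"
      using KL drK by simp
    fix k assume "k \<in> LQ \<Sigma> (revL L) \<and> dr \<Sigma> L k = tau \<Sigma> L j"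
    with KL drK show "k = ?K"
      using inj_onD[OF inj_on_dr[OF L]] by metis
  qed
qed

context
  fixes \<Sigma> :: "'a set" and L :: "'a list set"
  assumes L: "L \<subseteq> lists \<Sigma>" and fin: "finite (LQ \<Sigma> L)"
    and generators: "\<And>j. j \<in> JI (LQ \<Sigma> L) \<Longrightarrow> \<exists>v. is_generator (LQ \<Sigma> L) j v"
begin

lemma mem_theta_iff:
  assumes j: "j \<in> JI (LQ \<Sigma> L)"
  shows "w \<in> theta \<Sigma> L j \<longleftrightarrow> j \<subseteq> lderiv (rev w) L"
proof -
  obtain v where "is_generator (LQ \<Sigma> L) j v"
    using generators[OF j] ..
  note theta_eq_lderiv[OF L subsetD[OF JI_LQ_subset j] this]
  then show ?thesis by simp
qed

lemma theta_in_JI: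
  assumes j: "j \<in> JI (LQ \<Sigma> L)"
  shows "theta \<Sigma> L j \<in> JI (LQ \<Sigma> (revL L))"
proof -
  obtain v where v: "is_generator (LQ \<Sigma> L) j v"
    using generators[OF j] ..
  have "v \<in> lists \<Sigma>"
    using v LQ_subset_lists[OF L subsetD[OF JI_LQ_subset j]] unfolding is_generator_def by blast
  then have LQ: "theta \<Sigma> L j \<in> LQ \<Sigma> (revL L)"
    using theta_eq_lderiv(1)[OF L subsetD[OF JI_LQ_subset j] v] by (simp add: lderiv_in_LQ)
  obtain u where u: "j = lderiv u L"
    using JI_LQ_is_lderiv[OF j] by metis
  have "theta \<Sigma> L j \<subseteq> lderiv y (revL L)" if "y @ rev u \<in> revL L" for y
  proof
    fix w assume "w \<in> theta \<Sigma> L j"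
    moreover have "rev y \<in> j"
      using that u by simp
    ultimately show "w \<in> lderiv y (revL L)"
      using mem_theta_iff[OF j] by auto
  qed
  moreover have "rev u \<in> theta \<Sigma> L j"
    using mem_theta_iff[OF j] u by simp
  ultimately have "is_generator (LQ \<Sigma> (revL L)) (theta \<Sigma> L j) (rev u)"
    unfolding is_generator_LQ_iff by blast
  with LQ show ?thesis
    by (rule generator_imp_JI[OF union_closed_LQ])
qed

lemma inj_on_theta: "inj_on (theta \<Sigma> L) (JI (LQ \<Sigma> L))"
proof (rule inj_onI)
  fix p q assume pq: "p \<in> JI (LQ \<Sigma> L)" "q \<in> JI (LQ \<Sigma> L)" "theta \<Sigma> L p = theta \<Sigma> L q"
  have sub: "p \<subseteq> lderiv u L \<longleftrightarrow> q \<subseteq> lderiv u L" for u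
    using mem_theta_iff[OF pq(1), of "rev u"] mem_theta_iff[OF pq(2), of "rev u"] pq(3) by simp
  obtain u1 u2 where "p = lderiv u1 L" "q = lderiv u2 L"
    using JI_LQ_is_lderiv pq(1,2) by metis
  then show "p = q"
    using sub[of u1] sub[of u2] by blast
qed

lemma lderiv_revL_eq_Union_theta:
  "lderiv y (revL L) = \<Union>(theta \<Sigma> L ` {j \<in> JI (LQ \<Sigma> L). rev y \<in> j})"
proof (intro equalityI subsetI)
  fix w assume "w \<in> lderiv y (revL L)"
  then have wy: "rev y \<in> lderiv (rev w) L"
    by simp
  with L have "rev w \<in> lists \<Sigma>" by auto
  then have "lderiv (rev w) L \<in> LQ \<Sigma> L"
    by (rule lderiv_in_LQ)
  from this wy obtain j where j: "j \<in> JI (LQ \<Sigma> L)" "j \<subseteq> lderiv (rev w) L" "rev y \<in> j"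
    by (rule JI_coverE[OF union_closed_LQ fin])
  then have "w \<in> theta \<Sigma> L j"
    using mem_theta_iff[OF j(1)] by simp
  with j show "w \<in> \<Union>(theta \<Sigma> L ` {j \<in> JI (LQ \<Sigma> L). rev y \<in> j})"
    by blast
next
  fix w assume "w \<in> \<Union>(theta \<Sigma> L ` {j \<in> JI (LQ \<Sigma> L). rev y \<in> j})"
  then obtain j where j: "j \<in> JI (LQ \<Sigma> L)" "rev y \<in> j" "w \<in> theta \<Sigma> L j"
    by blast
  then have "j \<subseteq> lderiv (rev w) L"
    using mem_theta_iff[OF j(1)] by simp
  with j(2) show "w \<in> lderiv y (revL L)"
    by auto
qed

lemma theta_image: "theta \<Sigma> L ` JI (LQ \<Sigma> L) = JI (LQ \<Sigma> (revL L))"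
proof
  show "theta \<Sigma> L ` JI (LQ \<Sigma> L) \<subseteq> JI (LQ \<Sigma> (revL L))"
    using theta_in_JI by blast
next
  show "JI (LQ \<Sigma> (revL L)) \<subseteq> theta \<Sigma> L ` JI (LQ \<Sigma> L)"
  proof
    fix Y assume Y: "Y \<in> JI (LQ \<Sigma> (revL L))"
    then obtain y where y: "Y = lderiv y (revL L)"
      using JI_LQ_is_lderiv by metis
    let ?J = "{j \<in> JI (LQ \<Sigma> L). rev y \<in> j}"
    have "finite ?J"
      using JI_LQ_subset fin by (auto intro: finite_subset)
    then have "finite (theta \<Sigma> L ` ?J)"
      by (rule finite_imageI)
    moreover have "theta \<Sigma> L ` ?J \<subseteq> LQ \<Sigma> (revL L)"
      using theta_in_JI JI_LQ_subset by blast
    moreover have "Y = \<Union>(theta \<Sigma> L ` ?J)"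
      using y lderiv_revL_eq_Union_theta by simp
    ultimately have "Y \<in> theta \<Sigma> L ` ?J"
      by (rule JI_mem_of_Union[OF union_closed_LQ Y])
    then show "Y \<in> theta \<Sigma> L ` JI (LQ \<Sigma> L)"
      by blast
  qed
qed

lemma theta_subset_lderiv_iff:
  assumes p: "p \<in> JI (LQ \<Sigma> L)" and q: "q \<in> JI (LQ \<Sigma> L)"
  shows "theta \<Sigma> L p \<subseteq> lderiv [a] (theta \<Sigma> L q) \<longleftrightarrow> q \<subseteq> lderiv [a] p"
proof
  assume sub: "theta \<Sigma> L p \<subseteq> lderiv [a] (theta \<Sigma> L q)"
  obtain u where u: "p = lderiv u L"
    using JI_LQ_is_lderiv[OF p] by metis
  then have "rev u \<in> theta \<Sigma> L p"
    using mem_theta_iff[OF p] by simp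
  with sub have "a # rev u \<in> theta \<Sigma> L q"
    by auto
  then show "q \<subseteq> lderiv [a] p"
    using mem_theta_iff[OF q] u by simp
next
  assume "q \<subseteq> lderiv [a] p"
  then show "theta \<Sigma> L p \<subseteq> lderiv [a] (theta \<Sigma> L q)"
    using mem_theta_iff[OF p] mem_theta_iff[OF q] lderiv_mono[of p _ "[a]"] by fastforce
qed

lemma theta_subset_revL_iff:
  assumes p: "p \<in> JI (LQ \<Sigma> L)"
  shows "theta \<Sigma> L p \<subseteq> revL L \<longleftrightarrow> [] \<in> p"
proof
  obtain u where u: "p = lderiv u L"
    using JI_LQ_is_lderiv[OF p] by metis
  assume "theta \<Sigma> L p \<subseteq> revL L"
  moreover have "rev u \<in> theta \<Sigma> L p"
    using mem_theta_iff[OF p] u by simp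
  ultimately show "[] \<in> p"
    using u by auto
next
  assume "[] \<in> p"
  show "theta \<Sigma> L p \<subseteq> revL L"
  proof
    fix w assume "w \<in> theta \<Sigma> L p"
    then have "[] \<in> lderiv (rev w) L"
      using mem_theta_iff[OF p] \<open>[] \<in> p\<close> by blast
    then show "w \<in> revL L" by simp
  qed
qed

lemma theta_nfa_iso: "nfa_iso (theta \<Sigma> L) (canonical_RFSA \<Sigma> L) (nfa_rev (canonical_RFSA \<Sigma> (revL L)))"
  unfolding nfa_iso_def
proof (intro conjI ballI allI)
  show "bij_betw (theta \<Sigma> L) (states (canonical_RFSA \<Sigma> L)) (states (nfa_rev (canonical_RFSA \<Sigma> (revL L))))"
    using inj_on_theta theta_image by (simp add: bij_betw_def nfa_rev_def canonical_RFSA_def)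
  fix p q a assume "p \<in> states (canonical_RFSA \<Sigma> L)" "q \<in> states (canonical_RFSA \<Sigma> L)"
  then have pq: "p \<in> JI (LQ \<Sigma> L)" "q \<in> JI (LQ \<Sigma> L)"
    by (simp_all add: canonical_RFSA_def)
  then show "(p, a, q) \<in> trans (canonical_RFSA \<Sigma> L) \<longleftrightarrow>
      (theta \<Sigma> L p, a, theta \<Sigma> L q) \<in> trans (nfa_rev (canonical_RFSA \<Sigma> (revL L)))"
    using theta_in_JI theta_subset_lderiv_iff by (auto simp: nfa_rev_def trans_canonical_RFSA)
next
  fix p assume "p \<in> states (canonical_RFSA \<Sigma> L)"
  then have p: "p \<in> JI (LQ \<Sigma> L)"
    by (simp add: canonical_RFSA_def)
  then show "p \<in> init (canonical_RFSA \<Sigma> L) \<longleftrightarrow> theta \<Sigma> L p \<in> init (nfa_rev (canonical_RFSA \<Sigma> (revL L)))"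
    using theta_in_JI mem_theta_iff[OF p, of "[]"] by (simp add: nfa_rev_def canonical_RFSA_def)
  show "p \<in> final (canonical_RFSA \<Sigma> L) \<longleftrightarrow> theta \<Sigma> L p \<in> final (nfa_rev (canonical_RFSA \<Sigma> (revL L)))"
    using p theta_in_JI theta_subset_revL_iff[OF p] by (simp add: nfa_rev_def canonical_RFSA_def)
qed

end

theorem mainTheorem20:
  fixes \<Sigma> :: "'a set" and L :: "'a list set"
  assumes "finite \<Sigma>" and "regular \<Sigma> L"
  shows "(biRFSA \<Sigma> L \<longleftrightarrow> topological \<Sigma> L) \<and>
         (topological \<Sigma> L \<longrightarrow>
            nfa_iso (theta \<Sigma> L) (canonical_RFSA \<Sigma> L) (nfa_rev (canonical_RFSA \<Sigma> (revL L))))"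
proof -
  have L: "L \<subseteq> lists \<Sigma>"
    using assms(2) by (rule regular_subset_lists)
  have finL: "finite (LQ \<Sigma> L)"
    using regular_finite_derivs[OF assms(2)] by (rule finite_LQ)
  have finR: "finite (LQ \<Sigma> (revL L))"
    using finite_derivs_revL[OF L regular_finite_derivs[OF assms(2)]] by (rule finite_LQ)
  have top: "topological \<Sigma> L \<longleftrightarrow> (\<forall>j\<in>JI (LQ \<Sigma> L). \<exists>v. is_generator (LQ \<Sigma> L) j v)"
    unfolding topological_def using union_closed_LQ finL by (rule distributive_iff_generators)
  have "biRFSA \<Sigma> L \<Longrightarrow> topological \<Sigma> L"
    unfolding biRFSA_def nfa_isomorphic_def top using nfa_iso_rev_generator[OF L finL finR] by blast
  moreover have "topological \<Sigma> L \<Longrightarrow>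
      nfa_iso (theta \<Sigma> L) (canonical_RFSA \<Sigma> L) (nfa_rev (canonical_RFSA \<Sigma> (revL L)))"
    unfolding top using theta_nfa_iso[OF L finL] by blast
  ultimately show ?thesis
    unfolding biRFSA_def nfa_isomorphic_def by blast
qed

end
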